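(* Let $T=T_\lambda$ ($\lambda\in(1,2)$) be a tent map whose critical point $c$ has period $m\ge 3$, and let $K$ be its kneading sequence. (1) If for some $N\in\mathbb N$ a word $\mathbf s\in\{0,1\}^N$ is not the initial $N$-segment of $\mathcal I(x)$ for any $x\in[0,T(c)]$, then there is a segment (block of consecutive symbols) $\mathbf r$ of $\mathbf s$ with length $j\le m$ such that $\mathbf r\succ K|_j$. (2) If $\mathbf t\in\{0,1\}^{\mathbb N}$ satisfies $\sigma^k(\mathbf t)\succ K$ for some $k\ge 0$, then there is a segment $\mathbf r$ of $\mathbf t$ with length $j\le m$ such that $\mathbf r\succ K|_j$.
   Context: For $\lambda\in(1,2]$ the tent map $T_\lambda:[0,1]\to[0,1]$ is $T_\lambda(x)=\lambda x$ on $[0,1/2]$ and $\lambda(1-x)$ on $[1/2,1]$, with critical point $c=1/2$. $\Omega=\{0,1,C\}$. The address of $x$ is $0$ if $x<c$, $C$ if $x=c$, $1$ if $x>c$; the itinerary $\mathcal I(x)$ is the sequence of addresses of $x,T(x),T^2(x),\dots$; $\mathcal I^+(x)=\lim_{y\downarrow x}\mathcal I(y)$ (limit in the product topology on $\Omega^{\mathbb N}$). The kneading sequence is $K=\sigma(\mathcal I^+(c))$, $\sigma$ the shift. A word is finite string over $\Omega$; it is even if it contains an even number of $1$'s and odd otherwise. $\mathbf s|_k$ denotes the first $k$ symbols. Parity lexicographic order: set $0<C<1$; for two sequences (or two words of equal length) $\mathbf s\ne\mathbf t$ with first difference at index $k$ (i.e. $s_i=t_i$ for $i<k$, $s_k\ne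 t_k$), $\mathbf s\prec\mathbf t$ iff either $s_0\dots s_{k-1}$ is even and $s_k<t_k$, or $s_0\dots s_{k-1}$ is odd and $s_k>t_k$; $\succ$ is the reverse relation. *)

theory Defs
  imports Complex_Main
begin

datatype sym = S0 | SC | S1

fun rank :: "sym \<Rightarrow> nat" where
  "rank S0 = 0" | "rank SC = 1" | "rank S1 = 2"

definition tent :: "real \<Rightarrow> real \<Rightarrow> real" where
  "tent lam x = (if x \<le> 1/2 then lam * x else lam * (1 - x))"

definition crit :: real where "crit = 1/2"

definition addr :: "real \<Rightarrow> sym" where
  "addr x = (if x < crit then S0 else if x = crit then SC else S1)"

definition itin :: "real \<Rightarrow> real \<Rightarrow> nat \<Rightarrow> sym" where
  "itin lam x n = addr ((tent lam ^^ n) x)"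

text \<open>I^+(x) = lim_{y -> x+} I(y) in the product topology on sequences over a finite alphabet:
  each coordinate is eventually constant as y tends to x from the right.\<close>
definition itin_plus :: "real \<Rightarrow> real \<Rightarrow> nat \<Rightarrow> sym" where
  "itin_plus lam x = (THE s. \<forall>n. eventually (\<lambda>y. itin lam y n = s n) (at_right x))"

definition kneading :: "real \<Rightarrow> nat \<Rightarrow> sym" where
  "kneading lam = (\<lambda>n. itin_plus lam crit (Suc n))"

definition num_ones :: "sym list \<Rightarrow> nat" where
  "num_ones w = length (filter (\<lambda>a. a = S1) w)"

definition even_word :: "sym list \<Rightarrow> bool" where
  "even_word w \<longleftrightarrow> even (num_ones w)"

definition plex_less :: "(nat \<Rightarrow> sym) \<Rightarrow> (nat \<Rightarrow> sym) \<Rightarrow> bool" where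
  "plex_less s t \<longleftrightarrow> (\<exists>k. (\<forall>i<k. s i = t i) \<and> s k \<noteq> t k \<and>
     (if even_word (map s [0..<k]) then rank (s k) < rank (t k) else rank (s k) > rank (t k)))"

definition plex_less_word :: "sym list \<Rightarrow> sym list \<Rightarrow> bool" where
  "plex_less_word u v \<longleftrightarrow> length u = length v \<and> (\<exists>k < length u. take k u = take k v \<and> u ! k \<noteq> v ! k \<and>
     (if even_word (take k u) then rank (u ! k) < rank (v ! k) else rank (u ! k) > rank (v ! k)))"

definition shift :: "(nat \<Rightarrow> sym) \<Rightarrow> nat \<Rightarrow> nat \<Rightarrow> sym" where
  "shift t k = (\<lambda>n. t (n + k))"

definition prefix_seq :: "(nat \<Rightarrow> sym) \<Rightarrow> nat \<Rightarrow> sym list" where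
  "prefix_seq s j = map s [0..<j]"

definition crit_period :: "real \<Rightarrow> nat \<Rightarrow> bool" where
  "crit_period lam m \<longleftrightarrow> m > 0 \<and> (tent lam ^^ m) crit = crit \<and>
     (\<forall>k. 0 < k \<and> k < m \<longrightarrow> (tent lam ^^ k) crit \<noteq> crit)"

end

theory Submission
  imports Defs
begin

(*
  Write c_n = T^n(c) for the orbit of the critical point and K for the kneading sequence.

  1. The kneading sequence.  Just to the right of c every iterate T^n is affine,
     T^n(y) = c_n + o_n * lam^n * (y - c) with an orientation o_n = +-1 that flips at
     each symbol 1.  Hence the n-th symbol of I^+(c) is the address of c_n, or, when
     c_n = c, the symbol determined by the sign o_n, which is fixed by the parity of
     the preceding symbols.  If c has period m, then K is m-periodic and K|_m is even.

  2. Exceeding blocks.  "f exceeds K at (i,d)" means f(i..i+d-1) = K|_d and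
     f(i..i+d) is parity-lexicographically above K|_(d+1).  When K is m-periodic with
     K|_m even, such a block can be pushed m places to the right, so one with d < m
     exists; this is the bound j <= m of the theorem.

  3. Admissible intervals (part (1)).  While a word w over {0,1} is read, we keep an
     open interval (l,r) all of whose points are T^|w|(x) for some x in [0,T(c)] with
     itinerary beginning with w.  Each endpoint is 0 or some c_(k+1) such that w ends
     in K|_k, the parity of K|_k telling on which side the interval lies.  Appending
     a symbol either shrinks and maps the interval, or it falls on the wrong side of
     an endpoint c_(k+1), and then w followed by the symbol ends in a block exceeding K.

  Part (2): if sigma^k(t) is above K, then t exceeds K at (k,d) for the first difference
  d, and step 2 shortens the block.  Steps 1 and 3 only use lam > 0; the period of c
  enters only through step 2.
*)

lemma num_ones_append [simp]: "num_ones (xs @ ys) = num_ones xs + num_ones ys"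
  by (simp add: num_ones_def)

lemma num_ones_simps [simp]:
  "num_ones [] = 0"
  "num_ones (x # xs) = (if x = S1 then Suc (num_ones xs) else num_ones xs)"
  by (simp_all add: num_ones_def)

lemma prefix_seq_Suc: "prefix_seq f (Suc n) = prefix_seq f n @ [f n]"
  by (simp add: prefix_seq_def)

lemma crit_pos: "0 < crit"
  by (simp add: crit_def)

lemma tent_left: "x \<le> crit \<Longrightarrow> tent lam x = lam * x"
  by (simp add: tent_def crit_def)

lemma tent_right: "crit \<le> x \<Longrightarrow> tent lam x = lam * (1 - x)"
  by (auto simp: tent_def crit_def)

subsection \<open>The kneading sequence of the tent map\<close>

text \<open>The address of the points z + v * h for all small h > 0 (for v \<noteq> 0).\<close>
definition right_addr :: "real \<Rightarrow> real \<Rightarrow> sym" where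
  "right_addr z v = (if z < crit then S0 else if crit < z then S1 else if 0 < v then S1 else S0)"

lemma right_addr_scale: "0 < a \<Longrightarrow> right_addr z (v * a) = right_addr z v"
  by (simp add: right_addr_def zero_less_mult_iff)

lemma eventually_addr_affine:
  fixes z v x0 :: real
  assumes "v \<noteq> 0"
  shows "eventually (\<lambda>y. addr (z + v * (y - x0)) = right_addr z v) (at_right x0)"
proof -
  define \<delta> where "\<delta> = (if z = crit then 1 else \<bar>z - crit\<bar> / \<bar>v\<bar>)"
  have "0 < \<delta>" using assms by (simp add: \<delta>_def)
  then have near: "eventually (\<lambda>y. y \<in> {x0<..<x0 + \<delta>}) (at_right x0)"
    by (intro eventually_at_right_real) simp
  show ?thesis
  proof (rule eventually_mono[OF near])
    fix y assume y: "y \<in> {x0<..<x0 + \<delta>}"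
    show "addr (z + v * (y - x0)) = right_addr z v"
    proof (cases "z = crit")
      case True
      then show ?thesis using y assms
        by (auto simp: addr_def right_addr_def zero_less_mult_iff mult_less_0_iff)
    next
      case False
      have "y - x0 < \<bar>z - crit\<bar> / \<bar>v\<bar>" using y False by (simp add: \<delta>_def)
      then have "\<bar>v * (y - x0)\<bar> < \<bar>z - crit\<bar>"
        using y assms by (simp add: abs_mult pos_less_divide_eq mult.commute)
      then show ?thesis using False by (auto simp: addr_def right_addr_def)
    qed
  qed
qed

lemma tent_same_side:
  assumes "addr u = right_addr z v"
  shows "tent lam u = tent lam z + (if right_addr z v = S1 then - lam else lam) * (u - z)"
  using assms by (auto simp: addr_def right_addr_def tent_def crit_def algebra_simps split: if_splits)

text \<open>The orientation o_n of T^n just to the right of c, and the address of T^n there.\<close>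
primrec orient :: "real \<Rightarrow> nat \<Rightarrow> real" where
  "orient lam 0 = 1"
| "orient lam (Suc n) =
     (if right_addr ((tent lam ^^ n) crit) (orient lam n) = S1 then - orient lam n else orient lam n)"

definition crit_addr :: "real \<Rightarrow> nat \<Rightarrow> sym" where
  "crit_addr lam n = right_addr ((tent lam ^^ n) crit) (orient lam n)"

lemma orient_parity: "orient lam n = (-1) ^ num_ones (map (crit_addr lam) [0..<n])"
  by (induction n) (auto simp: crit_addr_def)

lemma orient_nonzero: "orient lam n \<noteq> 0"
  by (simp add: orient_parity)

lemma orient_pm: "orient lam n = 1 \<or> orient lam n = -1"
  by (induction n) auto

lemma orient_one: "orient lam 1 = -1"
  by (simp add: right_addr_def crit_pos)

lemma tent_iter_affine_right_of_crit:
  assumes lam: "0 < lam"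
  shows "eventually (\<lambda>y. (tent lam ^^ n) y = (tent lam ^^ n) crit + orient lam n * lam ^ n * (y - crit))
           (at_right crit)"
proof (induction n)
  case 0
  show ?case by simp
next
  case (Suc n)
  define z where "z = (tent lam ^^ n) crit"
  define v where "v = orient lam n * lam ^ n"
  have "right_addr z v = crit_addr lam n"
    using lam by (simp add: v_def z_def crit_addr_def right_addr_scale)
  moreover have "v \<noteq> 0" using lam by (simp add: v_def orient_nonzero)
  ultimately have "eventually (\<lambda>y. addr (z + v * (y - crit)) = crit_addr lam n) (at_right crit)"
    using eventually_addr_affine by metis
  with Suc.IH show ?case
  proof eventually_elim
    case (elim y)
    then have on_side: "addr ((tent lam ^^ n) y) = right_addr z (orient lam n)"
      by (simp add: z_def v_def crit_addr_def)
    have "(tent lam ^^ Suc n) y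
        = tent lam z + (if crit_addr lam n = S1 then - lam else lam) * ((tent lam ^^ n) y - z)"
      using tent_same_side[OF on_side] by (simp add: crit_addr_def z_def)
    also have "\<dots> = (tent lam ^^ Suc n) crit + orient lam (Suc n) * lam ^ Suc n * (y - crit)"
    proof -
      have "(tent lam ^^ n) y - z = v * (y - crit)" using elim(1) by (simp add: z_def v_def)
      then show ?thesis by (simp add: z_def v_def crit_addr_def)
    qed
    finally show ?case .
  qed
qed

lemma eventually_itin_right_of_crit:
  assumes "0 < lam"
  shows "eventually (\<lambda>y. itin lam y n = crit_addr lam n) (at_right crit)"
proof -
  have "orient lam n * lam ^ n \<noteq> 0" using assms by (simp add: orient_nonzero)
  from eventually_addr_affine[OF this]
  have "eventually (\<lambda>y. addr ((tent lam ^^ n) crit + orient lam n * lam ^ n * (y - crit))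
           = crit_addr lam n) (at_right crit)"
    using assms by (simp add: crit_addr_def right_addr_scale)
  with tent_iter_affine_right_of_crit[OF assms, of n] show ?thesis
    by eventually_elim (simp add: itin_def)
qed

lemma itin_plus_crit:
  assumes "0 < lam"
  shows "itin_plus lam crit = crit_addr lam"
  unfolding itin_plus_def
proof (rule the_equality)
  show "\<forall>n. eventually (\<lambda>y. itin lam y n = crit_addr lam n) (at_right crit)"
    using eventually_itin_right_of_crit[OF assms] by blast
  fix s assume s: "\<forall>n. eventually (\<lambda>y. itin lam y n = s n) (at_right crit)"
  show "s = crit_addr lam"
  proof
    fix n
    from s[rule_format, of n] eventually_itin_right_of_crit[OF assms, of n]
    have "eventually (\<lambda>y. s n = crit_addr lam n) (at_right crit)"
      by eventually_elim simp
    then show "s n = crit_addr lam n" by simp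
  qed
qed

lemma kneading_crit_addr: "0 < lam \<Longrightarrow> kneading lam n = crit_addr lam (Suc n)"
  by (simp add: kneading_def itin_plus_crit)

text \<open>o_(k+1) > 0 iff K|_k is odd, since the first address (that of c itself) is 1.\<close>
lemma orient_Suc_pos:
  assumes "0 < lam"
  shows "0 < orient lam (Suc k) \<longleftrightarrow> odd (num_ones (prefix_seq (kneading lam) k))"
proof -
  have "map (crit_addr lam) [0..<Suc k] = S1 # prefix_seq (kneading lam) k"
    using assms by (simp add: map_upt_Suc prefix_seq_def kneading_crit_addr crit_addr_def right_addr_def
                    del: upt_Suc)
  then show ?thesis by (simp add: orient_parity neg_one_even_power neg_one_odd_power del: upt_Suc)
qed

lemma kneading_side:
  assumes "0 < lam"
  shows "kneading lam k = right_addr ((tent lam ^^ Suc k) crit)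
           (if odd (num_ones (prefix_seq (kneading lam) k)) then 1 else -1)"
  using orient_Suc_pos[OF assms, of k] orient_nonzero[of lam "Suc k"]
  by (simp add: kneading_crit_addr[OF assms] crit_addr_def right_addr_def del: orient.simps)

lemma orient_periodic:
  assumes per: "(tent lam ^^ m) crit = crit"
  shows "orient lam (Suc n + m) = orient lam (Suc n)"
proof (induction n)
  case 0
  have "right_addr ((tent lam ^^ m) crit) v = (if 0 < v then S1 else S0)" for v
    using per by (simp add: right_addr_def)
  then have "orient lam (Suc m) = -1" using orient_pm[of lam m] by auto
  then show ?case using orient_one by simp
next
  case (Suc n)
  have "(tent lam ^^ (Suc n + m)) crit = (tent lam ^^ Suc n) crit"
    using per by (simp add: funpow_add)
  with Suc.IH show ?case by (simp del: funpow.simps)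
qed

lemma kneading_periodic:
  assumes "0 < lam" and per: "(tent lam ^^ m) crit = crit"
  shows "kneading lam (n + m) = kneading lam n"
proof -
  have "(tent lam ^^ (Suc n + m)) crit = (tent lam ^^ Suc n) crit"
    using per by (simp add: funpow_add)
  with orient_periodic[OF per, of n] show ?thesis
    by (simp add: kneading_crit_addr[OF assms(1)] crit_addr_def del: funpow.simps orient.simps)
qed

text \<open>K|_m is even: the orientation after a full period equals that after the first step.\<close>
lemma kneading_period_even:
  assumes "0 < lam" and per: "(tent lam ^^ m) crit = crit"
  shows "even (num_ones (prefix_seq (kneading lam) m))"
proof -
  have "orient lam (Suc m) = orient lam (Suc 0)"
    using orient_periodic[OF per, of 0] by simp
  then have "\<not> 0 < orient lam (Suc m)" using orient_one by simp
  then show ?thesis using orient_Suc_pos[OF assms(1), of m] by simp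
qed

subsection \<open>Blocks exceeding the kneading sequence\<close>

definition exceeds_at :: "(nat \<Rightarrow> sym) \<Rightarrow> (nat \<Rightarrow> sym) \<Rightarrow> nat \<Rightarrow> nat \<Rightarrow> bool" where
  "exceeds_at K f i d \<longleftrightarrow> (\<forall>e<d. f (i + e) = K e) \<and> f (i + d) \<noteq> K d \<and>
     (if even_word (map K [0..<d]) then rank (K d) < rank (f (i + d))
      else rank (f (i + d)) < rank (K d))"

lemma exceeds_at_cong:
  "exceeds_at K f i d \<Longrightarrow> (\<And>j. j \<le> i + d \<Longrightarrow> f j = g j) \<Longrightarrow> exceeds_at K g i d"
  unfolding exceeds_at_def by auto

text \<open>If K has period m and K|_m is even, an exceeding block of depth d \<ge> m ends in an
  exceeding block of depth d - m, since K|_d = K|_m K|_(d-m) has the parity of K|_(d-m).\<close>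
lemma exceeds_at_drop_period:
  assumes per: "\<And>n. K (n + m) = K n" and ev: "even (num_ones (map K [0..<m]))"
    and exc: "exceeds_at K f i d" and md: "m \<le> d"
  shows "exceeds_at K f (i + m) (d - m)"
proof -
  have "[0..<d] = [0..<m] @ map (\<lambda>e. e + m) [0..<d - m]"
    using upt_add_eq_append[of 0 m "d - m"] md by (simp add: map_add_upt)
  then have "map K [0..<d] = map K [0..<m] @ map K [0..<d - m]"
    using per by simp
  then have parity: "even_word (map K [0..<d]) = even_word (map K [0..<d - m])"
    using ev by (simp add: even_word_def)
  have agree: "f (i + m + e) = K e" if "e < d - m" for e
  proof -
    have "f (i + (e + m)) = K (e + m)" using exc that unfolding exceeds_at_def by auto
    then show ?thesis using per[of e] by (simp add: ac_simps)
  qed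
  have last: "f (i + m + (d - m)) = f (i + d)" "K (d - m) = K d"
    using md per[of "d - m"] by simp_all
  show ?thesis
    using exc parity agree unfolding exceeds_at_def last by simp
qed

lemma exceeds_at_short:
  assumes per: "\<And>n. K (n + m) = K n" and ev: "even (num_ones (map K [0..<m]))" and m: "0 < m"
  shows "exceeds_at K f i d \<Longrightarrow> \<exists>i' d'. d' < m \<and> i' + d' = i + d \<and> exceeds_at K f i' d'"
proof (induction d arbitrary: i rule: less_induct)
  case (less d)
  show ?case
  proof (cases "d < m")
    case True
    then show ?thesis using less.prems by blast
  next
    case False
    then have "exceeds_at K f (i + m) (d - m)"
      using exceeds_at_drop_period[OF per ev less.prems] by simp
    with less.IH[of "d - m"] m False show ?thesis by fastforce
  qed
qed

lemma plex_less_word_intro: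
  assumes len: "length v = Suc d" and eq: "\<And>e. e < d \<Longrightarrow> v ! e = K e" and ne: "v ! d \<noteq> K d"
    and ord: "if even_word (map K [0..<d]) then rank (K d) < rank (v ! d) else rank (v ! d) < rank (K d)"
  shows "plex_less_word (prefix_seq K (Suc d)) v"
  unfolding plex_less_word_def
proof (intro conjI exI[of _ d])
  have init: "take d (prefix_seq K (Suc d)) = map K [0..<d]" and last: "prefix_seq K (Suc d) ! d = K d"
    by (simp_all add: prefix_seq_def take_map del: upt_Suc)
  show "take d (prefix_seq K (Suc d)) = take d v"
    unfolding init by (rule nth_equalityI) (use len eq in auto)
  show "if even_word (take d (prefix_seq K (Suc d))) then rank (prefix_seq K (Suc d) ! d) < rank (v ! d)
        else rank (v ! d) < rank (prefix_seq K (Suc d) ! d)"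
    using ord unfolding init last .
  show "prefix_seq K (Suc d) ! d \<noteq> v ! d" using ne last by simp
qed (use len in \<open>simp_all add: prefix_seq_def\<close>)

lemma exceeds_at_word:
  "exceeds_at K ((!) s) i d \<Longrightarrow> i + d < length s \<Longrightarrow>
     plex_less_word (prefix_seq K (Suc d)) (take (Suc d) (drop i s))"
  by (rule plex_less_word_intro) (auto simp: exceeds_at_def)

lemma exceeds_at_seq:
  "exceeds_at K t i d \<Longrightarrow> plex_less_word (prefix_seq K (Suc d)) (prefix_seq (shift t i) (Suc d))"
  by (rule plex_less_word_intro)
     (auto simp: exceeds_at_def prefix_seq_def shift_def add.commute simp del: upt_Suc)

lemma plex_less_shift_exceeds_at:
  assumes "plex_less K (shift t k)"
  shows "\<exists>d. exceeds_at K t k d"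
proof -
  obtain d where "\<forall>e<d. K e = t (e + k)" "K d \<noteq> t (d + k)"
    "if even_word (map K [0..<d]) then rank (K d) < rank (t (d + k)) else rank (t (d + k)) < rank (K d)"
    using assms unfolding plex_less_def shift_def by blast
  then have "exceeds_at K t k d" unfolding exceeds_at_def by (simp add: add.commute)
  then show ?thesis ..
qed

subsection \<open>Admissible intervals\<close>

definition realizes :: "real \<Rightarrow> sym list \<Rightarrow> real \<Rightarrow> bool" where
  "realizes lam w y \<longleftrightarrow>
     (\<exists>x\<in>{0..tent lam crit}. prefix_seq (itin lam x) (length w) = w \<and> (tent lam ^^ length w) x = y)"

lemma realizes_snoc:
  assumes "realizes lam w y" and "addr y = a"
  shows "realizes lam (w @ [a]) (tent lam y)"
  using assms by (auto simp: realizes_def prefix_seq_Suc itin_def)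

text \<open>v = c_(k+1) for some k such that w ends in K|_k; the flag records the parity of K|_k,
  which is odd exactly when v is the left end of the interval carried along.\<close>
definition kneading_end :: "real \<Rightarrow> sym list \<Rightarrow> real \<Rightarrow> bool \<Rightarrow> bool" where
  "kneading_end lam w v left \<longleftrightarrow> (\<exists>k. v = (tent lam ^^ Suc k) crit \<and> k \<le> length w \<and>
     drop (length w - k) w = prefix_seq (kneading lam) k \<and>
     (odd (num_ones (prefix_seq (kneading lam) k)) \<longleftrightarrow> left))"

lemma kneading_end_crit_image: "kneading_end lam w (tent lam crit) False"
  unfolding kneading_end_def by (rule exI[of _ 0]) (simp add: prefix_seq_def)

lemma kneading_end_snoc:
  assumes lam: "0 < lam" and v: "kneading_end lam w v left"
    and a: "a = right_addr v (if left then 1 else -1)"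
  shows "kneading_end lam (w @ [a]) (tent lam v) (if a = S1 then \<not> left else left)"
proof -
  obtain k where k: "v = (tent lam ^^ Suc k) crit" "k \<le> length w"
    "drop (length w - k) w = prefix_seq (kneading lam) k"
    "odd (num_ones (prefix_seq (kneading lam) k)) \<longleftrightarrow> left"
    using v unfolding kneading_end_def by blast
  have "kneading lam k = a" using kneading_side[OF lam, of k] k(1,4) a by simp
  then show ?thesis unfolding kneading_end_def using k
    by (intro exI[of _ "Suc k"]) (auto simp: prefix_seq_Suc Suc_diff_le)
qed

lemma kneading_end_exceeds:
  assumes lam: "0 < lam" and v: "kneading_end lam w v left"
    and wrong: "if left then rank a < rank (right_addr v 1) else rank (right_addr v (-1)) < rank a"
  shows "\<exists>i d. i + d \<le> length w \<and> exceeds_at (kneading lam) ((!) (w @ [a])) i d"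
proof -
  obtain k where k: "v = (tent lam ^^ Suc k) crit" "k \<le> length w"
    and suffix: "drop (length w - k) w = prefix_seq (kneading lam) k"
    and parity: "odd (num_ones (prefix_seq (kneading lam) k)) \<longleftrightarrow> left"
    using v unfolding kneading_end_def by blast
  have K: "kneading lam k = right_addr v (if left then 1 else -1)"
    using kneading_side[OF lam, of k] k(1) parity by simp
  have agree: "(w @ [a]) ! (length w - k + e) = kneading lam e" if "e < k" for e
  proof -
    have "length w - k + e < length w" using that k(2) by arith
    then have "(w @ [a]) ! (length w - k + e) = drop (length w - k) w ! e"
      using k(2) by (simp add: nth_append)
    then show ?thesis using suffix that by (simp add: prefix_seq_def)
  qed
  have "exceeds_at (kneading lam) ((!) (w @ [a])) (length w - k) k"
    unfolding exceeds_at_def using agree k(2) K wrong parity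
    by (auto simp: even_word_def prefix_seq_def split: if_splits)
  then show ?thesis using k(2) by (intro exI) auto
qed

definition admissible_interval :: "real \<Rightarrow> sym list \<Rightarrow> real \<Rightarrow> real \<Rightarrow> bool" where
  "admissible_interval lam w l r \<longleftrightarrow> l < r \<and> (l = 0 \<or> kneading_end lam w l True) \<and>
     kneading_end lam w r False \<and> (\<forall>y. l < y \<and> y < r \<longrightarrow> realizes lam w y)"

lemma admissible_interval_Nil:
  assumes "0 < lam"
  shows "admissible_interval lam [] 0 (tent lam crit)"
  using assms kneading_end_crit_image
  by (auto simp: admissible_interval_def realizes_def prefix_seq_def tent_def crit_def)

lemma admissible_interval_snoc0:
  assumes lam: "0 < lam" and I: "admissible_interval lam w l r" and lc: "l < crit"
  shows "admissible_interval lam (w @ [S0]) (tent lam l) (tent lam (min r crit))"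
proof -
  have lr: "l < r" and L: "l = 0 \<or> kneading_end lam w l True" and R: "kneading_end lam w r False"
    and Y: "\<And>y. l < y \<Longrightarrow> y < r \<Longrightarrow> realizes lam w y"
    using I unfolding admissible_interval_def by blast+
  have tl: "tent lam l = lam * l" and tr: "tent lam (min r crit) = lam * min r crit"
    using lc by (simp_all add: tent_left)
  have "tent lam l = 0 \<or> kneading_end lam (w @ [S0]) (tent lam l) True"
    using L kneading_end_snoc[OF lam, of w l True S0] lc tl by (auto simp: right_addr_def)
  moreover have "kneading_end lam (w @ [S0]) (tent lam (min r crit)) False"
    using R kneading_end_snoc[OF lam, of w r False S0] kneading_end_crit_image
    by (cases "r \<le> crit") (auto simp: right_addr_def min_def)
  moreover have "realizes lam (w @ [S0]) y'" if "tent lam l < y'" "y' < tent lam (min r crit)" for y'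
  proof -
    define y where "y = y' / lam"
    have y': "y' = lam * y" using lam by (simp add: y_def)
    have "l < y" "y < min r crit"
      using that lam unfolding tl tr y' by simp_all
    then have "realizes lam (w @ [S0]) (tent lam y)"
      by (intro realizes_snoc Y) (auto simp: addr_def)
    then show ?thesis using \<open>y < min r crit\<close> by (simp add: tent_left y')
  qed
  ultimately show ?thesis using lr lc lam unfolding admissible_interval_def tl tr by auto
qed

lemma admissible_interval_snoc1:
  assumes lam: "0 < lam" and I: "admissible_interval lam w l r" and rc: "crit < r"
  shows "admissible_interval lam (w @ [S1]) (tent lam r) (tent lam (max l crit))"
proof -
  have lr: "l < r" and L: "l = 0 \<or> kneading_end lam w l True" and R: "kneading_end lam w r False"
    and Y: "\<And>y. l < y \<Longrightarrow> y < r \<Longrightarrow> realizes lam w y"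
    using I unfolding admissible_interval_def by blast+
  have tr: "tent lam r = lam * (1 - r)" and tl: "tent lam (max l crit) = lam * (1 - max l crit)"
    using rc by (simp_all add: tent_right)
  have "kneading_end lam (w @ [S1]) (tent lam r) True"
    using R kneading_end_snoc[OF lam, of w r False S1] rc by (simp add: right_addr_def)
  moreover have "kneading_end lam (w @ [S1]) (tent lam (max l crit)) False"
    using L kneading_end_snoc[OF lam, of w l True S1] kneading_end_crit_image crit_pos
    by (cases "crit \<le> l") (auto simp: right_addr_def max_def)
  moreover have "realizes lam (w @ [S1]) y'" if "tent lam r < y'" "y' < tent lam (max l crit)" for y'
  proof -
    define y where "y = 1 - y' / lam"
    have y': "y' = lam * (1 - y)" using lam by (simp add: y_def)
    have "max l crit < y" "y < r"
      using that lam unfolding tl tr y' by simp_all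
    then have "realizes lam (w @ [S1]) (tent lam y)"
      by (intro realizes_snoc Y) (auto simp: addr_def)
    then show ?thesis using \<open>max l crit < y\<close> by (simp add: tent_right y')
  qed
  ultimately show ?thesis using lr rc lam unfolding admissible_interval_def tl tr by auto
qed

lemma admissible_interval_step:
  assumes lam: "0 < lam" and I: "admissible_interval lam w l r" and a: "a \<in> {S0, S1}"
  shows "(\<exists>l' r'. admissible_interval lam (w @ [a]) l' r') \<or>
         (\<exists>i d. i + d \<le> length w \<and> exceeds_at (kneading lam) ((!) (w @ [a])) i d)"
proof -
  have L: "l = 0 \<or> kneading_end lam w l True" and R: "kneading_end lam w r False"
    using I unfolding admissible_interval_def by blast+
  consider "a = S0" "l < crit" | "a = S0" "crit \<le> l" | "a = S1" "crit < r" | "a = S1" "r \<le> crit"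
    using a by force
  then show ?thesis
  proof cases
    case 1
    then show ?thesis using admissible_interval_snoc0[OF lam I] by blast
  next
    case 2
    then have "kneading_end lam w l True" using L crit_pos by auto
    from kneading_end_exceeds[OF lam this] 2 show ?thesis by (simp add: right_addr_def)
  next
    case 3
    then show ?thesis using admissible_interval_snoc1[OF lam I] by blast
  next
    case 4
    from kneading_end_exceeds[OF lam R] 4 show ?thesis by (auto simp: right_addr_def)
  qed
qed

lemma admissible_or_exceeds:
  assumes lam: "0 < lam" and s: "set s \<subseteq> {S0, S1}"
  shows "n \<le> length s \<Longrightarrow> (\<exists>l r. admissible_interval lam (take n s) l r) \<or>
           (\<exists>i d. i + d < n \<and> exceeds_at (kneading lam) ((!) s) i d)"
proof (induction n)
  case 0
  then show ?case using admissible_interval_Nil[OF lam] by auto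
next
  case (Suc n)
  then have n: "n < length s" by simp
  have take_Suc: "take (Suc n) s = take n s @ [s ! n]" using n by (simp add: take_Suc_conv_app_nth)
  have a: "s ! n \<in> {S0, S1}" using s n nth_mem by blast
  from Suc.IH[OF less_imp_le[OF n]] show ?case
  proof (elim disjE exE conjE)
    fix i d assume "i + d < n" "exceeds_at (kneading lam) ((!) s) i d"
    then show ?thesis by auto
  next
    fix l r assume "admissible_interval lam (take n s) l r"
    from admissible_interval_step[OF lam this a] show ?thesis
    proof (elim disjE exE conjE)
      fix l' r' assume "admissible_interval lam (take n s @ [s ! n]) l' r'"
      then show ?thesis using take_Suc by auto
    next
      fix i d assume id: "i + d \<le> length (take n s)"
        and exc: "exceeds_at (kneading lam) ((!) (take n s @ [s ! n])) i d"
      have "exceeds_at (kneading lam) ((!) s) i d"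
        by (rule exceeds_at_cong[OF exc])
           (use id n in \<open>auto simp: nth_append intro!: arg_cong[where f = "(!) s"]\<close>)
      then show ?thesis using id n by auto
    qed
  qed
qed

lemma non_itinerary_word_exceeds:
  assumes lam: "0 < lam" and s: "set s \<subseteq> {S0, S1}"
    and not_itin: "\<forall>x\<in>{0..tent lam crit}. prefix_seq (itin lam x) (length s) \<noteq> s"
  shows "\<exists>i d. i + d < length s \<and> exceeds_at (kneading lam) ((!) s) i d"
proof -
  have "\<not> admissible_interval lam s l r" for l r
  proof
    assume "admissible_interval lam s l r"
    then have "realizes lam s ((l + r) / 2)" unfolding admissible_interval_def by auto
    with not_itin show False by (auto simp: realizes_def)
  qed
  then show ?thesis using admissible_or_exceeds[OF lam s, of "length s"] by simp
qed

theorem mainTheorem4: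
  fixes lam :: real and m :: nat
  assumes "1 < lam" and "lam < 2"
    and "crit_period lam m" and "m \<ge> 3"
  shows "(\<forall>(N::nat) (s::sym list). length s = N \<and> set s \<subseteq> {S0, S1} \<and>
            (\<forall>x \<in> {0..tent lam crit}. prefix_seq (itin lam x) N \<noteq> s) \<longrightarrow>
            (\<exists>i j. i + j \<le> N \<and> j \<le> m \<and>
               plex_less_word (prefix_seq (kneading lam) j) (take j (drop i s))))
      \<and> (\<forall>t::nat \<Rightarrow> sym. (\<forall>n. t n \<in> {S0, S1}) \<and> (\<exists>k. plex_less (kneading lam) (shift t k)) \<longrightarrow>
            (\<exists>i j. j \<le> m \<and>
               plex_less_word (prefix_seq (kneading lam) j) (prefix_seq (shift t i) j)))"
proof -
  have lam: "0 < lam" using assms(1) by simp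
  have per: "(tent lam ^^ m) crit = crit" and m: "0 < m" using assms(3) by (auto simp: crit_period_def)
  note short = exceeds_at_short[OF kneading_periodic[OF lam per]
                 kneading_period_even[OF lam per, unfolded prefix_seq_def] m]
  show ?thesis
  proof (intro conjI allI impI; elim conjE exE)
    fix N s assume "length s = N" "set s \<subseteq> {S0, S1}"
      "\<forall>x\<in>{0..tent lam crit}. prefix_seq (itin lam x) N \<noteq> s"
    with non_itinerary_word_exceeds[OF lam] obtain i d
      where "i + d < N" "exceeds_at (kneading lam) ((!) s) i d" by blast
    with short obtain i' d' where d': "d' < m" "i' + d' = i + d" "exceeds_at (kneading lam) ((!) s) i' d'"
      by blast
    have "plex_less_word (prefix_seq (kneading lam) (Suc d')) (take (Suc d') (drop i' s))"
      using exceeds_at_word[OF d'(3)] d'(2) \<open>i + d < N\<close> \<open>length s = N\<close> by simp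
    with d' \<open>i + d < N\<close>
    show "\<exists>i j. i + j \<le> N \<and> j \<le> m \<and> plex_less_word (prefix_seq (kneading lam) j) (take j (drop i s))"
      by (intro exI[of _ i'] exI[of _ "Suc d'"]) simp
  next
    fix t k assume "plex_less (kneading lam) (shift t k)"
    with plex_less_shift_exceeds_at short obtain i d where "d < m" "exceeds_at (kneading lam) t i d"
      by blast
    with exceeds_at_seq show "\<exists>i j. j \<le> m \<and>
        plex_less_word (prefix_seq (kneading lam) j) (prefix_seq (shift t i) j)"
      by (intro exI[of _ i] exI[of _ "Suc d"]) simp
  qed
qed

end
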